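(* Let $n\in\mathbb{N}$, $\alpha\in\mathbb{R}$ with $n<\alpha\le n+1$, $k\in\mathbb{N}$, $\mu\in\mathbb{R}$ with $\mu>-1$, and consider the differential operator in the Laplace variable $s$ $$\Pi^{n+1}_{k,\mu,\alpha}=\frac{1}{s^{2\alpha+k+\mu+3}}\cdot\frac{d}{ds}\cdot s^{2\alpha-n+1+k}\cdot\frac{d^{n+k+1}}{ds^{n+k+1}}\cdot s^{n+1}.$$ Then $\Pi^{n+1}_{k,\mu,\alpha}$ is an integral-annihilator for $x^{(\alpha)}(t_0)$ via the truncated fractional Taylor expansion $$x_{2\alpha-n}(t_0+t)=\sum_{j=0}^{n}\frac{t^j}{j!}x^{(j)}(t_0)+\frac{t^{\alpha}}{\Gamma(\alpha+1)}x^{(\alpha)}(t_0)+\frac{t^{2\alpha-n}}{\Gamma(2\alpha-n+1)}x^{(2\alpha-n)}(t_0),\quad t\ge0,$$ that is: (i) writing $\hat x_{2\alpha-n}(s)=\sum_{j=0}^n s^{-(j+1)}x^{(j)}(t_0)+s^{-(\alpha+1)}x^{(\alpha)}(t_0)+s^{-(2\alpha-n+1)}x^{(2\alpha-n)}(t_0)$ for its Laplace transform (in $t$), the terms involving $x^{(j)}(t_0)$, $0\le j\le n$, and $x^{(2\alpha-n)}(t_0)$ are annihilated, and for every $T>0$ $$(-1)^{n+1+k}\,\mathcal{L}^{-1}\{\Pi^{n+1}_{k,\mu,\alpha}\hat x_{2\alpha-n}\}(T)=\frac{\Gamma(\alpha+1+k)}{\Gamma(\alpha-n)}\,\frac{(\alpha-n)\,T^{n+\alpha+3+k+\mu}}{\Gamma(n+\alpha+k+\mu+4)}\,x^{(\alpha)}(t_0);$$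 (ii) after expansion by the Leibniz rule, $\Pi^{n+1}_{k,\mu,\alpha}$ is a finite linear combination of operators $s^{-\nu}\frac{d^m}{ds^m}$ with $\nu\ge\mu+1>0$, so that its action on a Laplace transform corresponds in the time domain to a Riemann–Liouville integral.
   Context: $\mathcal{L}^{-1}$ denotes the inverse Laplace transform. Here $x^{(j)}(t_0)$, $x^{(\alpha)}(t_0)$, $x^{(2\alpha-n)}(t_0)$ are arbitrary real coefficients (in the application, derivative values of a signal $x\in\mathcal{C}^n(I)$ at $t_0$, the fractional ones being Jumarie modified Riemann–Liouville derivatives $x^{(\beta)}=(x^{(n)})^{(\beta-n)}$). The time-domain meaning of $s^{-\nu}\frac{d^m}{ds^m}\hat g(s)$, $\nu>0$, is $T\mapsto\frac{1}{\Gamma(\nu)}\int_0^T(T-\tau)^{\nu-1}(-\tau)^m g(\tau)\,d\tau$. *)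

theory Defs
  imports "HOL-Analysis.Analysis"
begin

definition Pi_op :: "nat \<Rightarrow> nat \<Rightarrow> real \<Rightarrow> real \<Rightarrow> (real \<Rightarrow> real) \<Rightarrow> real \<Rightarrow> real" where
  "Pi_op n k \<mu> \<alpha> f s =
     s powr (- (2 * \<alpha> + real k + \<mu> + 3)) *
     deriv (\<lambda>u. u powr (2 * \<alpha> - real n + 1 + real k) *
                 (deriv ^^ (n + k + 1)) (\<lambda>v. v ^ (n + 1) * f v) u) s"

text \<open>Laplace transform of the truncated fractional Taylor expansion x_{2 alpha - n}(t_0 + t).
  a j = x^(j)(t_0), b = x^(alpha)(t_0), c = x^(2 alpha - n)(t_0).\<close>
definition xhat :: "nat \<Rightarrow> real \<Rightarrow> (nat \<Rightarrow> real) \<Rightarrow> real \<Rightarrow> real \<Rightarrow> real \<Rightarrow> real" where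
  "xhat n \<alpha> a b c s =
     (\<Sum>j\<le>n. s powr (- (real j + 1)) * a j) + s powr (- (\<alpha> + 1)) * b
     + s powr (- (2 * \<alpha> - real n + 1)) * c"

definition is_laplace_transform :: "(real \<Rightarrow> real) \<Rightarrow> (real \<Rightarrow> real) \<Rightarrow> bool" where
  "is_laplace_transform g F \<longleftrightarrow>
     (\<forall>s>0. ((\<lambda>T. exp (- s * T) * g T) has_integral F s) {0<..})"

definition smooth_on :: "real set \<Rightarrow> (real \<Rightarrow> real) \<Rightarrow> bool" where
  "smooth_on S f \<longleftrightarrow> (\<forall>m. \<forall>x\<in>S. (deriv ^^ m) f differentiable (at x))"

end

theory Submission
  imports Defs
begin

text \<open>On powers of \<open>s\<close> the operator acts diagonally: it sends \<open>s powr (-\<beta>)\<close> to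
  \<open>c(\<beta>) * s powr (-(\<beta> + n + k + \<mu> + 3))\<close>, where the multiplier \<open>c(\<beta>)\<close> is the falling factorial
  \<open>(n + 1 - \<beta>) (n - \<beta>) \<dots> (1 - k - \<beta>)\<close> produced by \<open>d^(n+k+1)/ds^(n+k+1)\<close> after
  multiplication by \<open>s^(n+1)\<close>, times the exponent \<open>2\<alpha> - n + 1 - \<beta>\<close> brought down by the outer
  \<open>d/ds\<close>. The falling factorial vanishes at the integer exponents \<open>\<beta> = j + 1\<close>, \<open>j \<le> n\<close>, the
  second factor at \<open>\<beta> = 2\<alpha> - n + 1\<close>, and at \<open>\<beta> = \<alpha> + 1\<close> the falling factorial is, up to the
  sign \<open>(-1)^(n+k+1)\<close>, the Pochhammer symbol \<open>\<Gamma>(\<alpha> + 1 + k) / \<Gamma>(\<alpha> - n)\<close>. The surviving power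
  \<open>s powr (-(p + 1))\<close> is the Laplace transform of \<open>T powr p / \<Gamma>(p + 1)\<close>.
  For the time-domain form, the product rule writes the operator as a sum of terms
  \<open>c * s powr r * f^(d)(s)\<close>; differentiation never raises the exponent \<open>r\<close> above its initial
  value \<open>n + 1\<close>, so every term carries \<open>s powr (-\<nu>)\<close> with \<open>\<nu> \<ge> \<mu> + 1\<close>.\<close>

lemma higher_deriv_eq_on_pos:
  fixes f g :: "real \<Rightarrow> real"
  assumes "\<And>v. v > 0 \<Longrightarrow> f v = g v" and "x > 0"
  shows "(deriv ^^ m) f x = (deriv ^^ m) g x"
proof -
  have "eventually (\<lambda>v. v \<in> {0<..}) (nhds x)"
    using assms(2) by (intro eventually_nhds_in_open) auto
  hence "eventually (\<lambda>v. f v = g v) (nhds x)"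
    by eventually_elim (simp add: assms(1))
  thus ?thesis by (rule higher_deriv_cong_ev) simp
qed

lemma deriv_eq_on_pos:
  fixes f g :: "real \<Rightarrow> real"
  assumes "\<And>v. v > 0 \<Longrightarrow> f v = g v" and "x > 0" and "(g has_real_derivative D) (at x)"
  shows "deriv f x = D"
  using higher_deriv_eq_on_pos[OF assms(1,2), where m=1] DERIV_imp_deriv[OF assms(3)] by simp

lemma higher_deriv_powr_sum:
  fixes w q :: "'i \<Rightarrow> real"
  assumes "finite I" and "x > 0"
  shows "(deriv ^^ m) (\<lambda>v. \<Sum>i\<in>I. w i * v powr q i) x
           = (\<Sum>i\<in>I. w i * (\<Prod>j<m. q i - real j) * x powr (q i - real m))"
  using assms(2)
proof (induction m arbitrary: x)
  case 0
  then show ?case by simp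
next
  case (Suc m)
  have "((\<lambda>v. \<Sum>i\<in>I. w i * (\<Prod>j<m. q i - real j) * v powr (q i - real m)) has_real_derivative
      (\<Sum>i\<in>I. w i * (\<Prod>j<m. q i - real j) * ((q i - real m) * x powr (q i - real m - 1)))) (at x)"
    using Suc.prems by (auto intro!: derivative_eq_intros) (simp add: mult_ac)
  also have "(\<Sum>i\<in>I. w i * (\<Prod>j<m. q i - real j) * ((q i - real m) * x powr (q i - real m - 1)))
      = (\<Sum>i\<in>I. w i * (\<Prod>j<Suc m. q i - real j) * x powr (q i - real (Suc m)))"
    by (simp add: algebra_simps diff_diff_eq)
  finally show ?case
    using deriv_eq_on_pos[OF Suc.IH Suc.prems] by simp
qed

lemma higher_deriv_power_mult_powr_sum:
  fixes w \<beta> :: "'i \<Rightarrow> real"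
  assumes "finite I" and "u > 0" and F: "\<And>v. v > 0 \<Longrightarrow> F v = (\<Sum>i\<in>I. w i * v powr (- \<beta> i))"
  shows "(deriv ^^ m) (\<lambda>v. v ^ N * F v) u
           = (\<Sum>i\<in>I. w i * (\<Prod>j<m. real N - \<beta> i - real j) * u powr (real N - \<beta> i - real m))"
proof -
  have "v ^ N * F v = (\<Sum>i\<in>I. w i * v powr (real N - \<beta> i))" if "v > 0" for v
  proof -
    have "v ^ N * v powr (- \<beta> i) = v powr (real N - \<beta> i)" for i
      unfolding powr_realpow[OF that, symmetric] powr_add[symmetric] by simp
    then show ?thesis
      using that by (simp add: F sum_distrib_left mult.left_commute)
  qed
  then have "(deriv ^^ m) (\<lambda>v. v ^ N * F v) u
      = (deriv ^^ m) (\<lambda>v. \<Sum>i\<in>I. w i * v powr (real N - \<beta> i)) u"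
    using assms(2) by (rule higher_deriv_eq_on_pos)
  also have "\<dots> = (\<Sum>i\<in>I. w i * (\<Prod>j<m. real N - \<beta> i - real j) * u powr (real N - \<beta> i - real m))"
    using assms(1,2) by (rule higher_deriv_powr_sum)
  finally show ?thesis .
qed

definition Pi_multiplier :: "nat \<Rightarrow> nat \<Rightarrow> real \<Rightarrow> real \<Rightarrow> real" where
  "Pi_multiplier n k \<alpha> \<beta> = (\<Prod>j<n + k + 1. real n + 1 - \<beta> - real j) * (2 * \<alpha> - real n + 1 - \<beta>)"

lemma Pi_op_powr_sum:
  fixes w \<beta> :: "'i \<Rightarrow> real"
  assumes "finite I" and "s > 0" and F: "\<And>v. v > 0 \<Longrightarrow> F v = (\<Sum>i\<in>I. w i * v powr (- \<beta> i))"
  shows "Pi_op n k \<mu> \<alpha> F s =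
           (\<Sum>i\<in>I. w i * Pi_multiplier n k \<alpha> (\<beta> i) * s powr (- (\<beta> i + real n + real k + \<mu> + 3)))"
proof -
  define P where "P = (\<lambda>i. \<Prod>j<n + k + 1. real n + 1 - \<beta> i - real j)"
  define e where "e = (\<lambda>i. 2 * \<alpha> - real n + 1 - \<beta> i)"
  have inner: "u powr (2 * \<alpha> - real n + 1 + real k) * (deriv ^^ (n + k + 1)) (\<lambda>v. v ^ (n + 1) * F v) u
      = (\<Sum>i\<in>I. w i * P i * u powr e i)" if "u > 0" for u
  proof -
    have "(deriv ^^ (n + k + 1)) (\<lambda>v. v ^ (n + 1) * F v) u
        = (\<Sum>i\<in>I. w i * P i * u powr (real n + 1 - \<beta> i - real (n + k + 1)))"
      using higher_deriv_power_mult_powr_sum[OF assms(1) that F, of "n + k + 1" "n + 1"]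
      unfolding P_def of_nat_add of_nat_1 .
    moreover have "u powr (2 * \<alpha> - real n + 1 + real k) * u powr (real n + 1 - \<beta> i - real (n + k + 1))
        = u powr e i" for i
      unfolding powr_add[symmetric] e_def by (rule arg_cong[where f="(powr) u"]) simp
    ultimately show ?thesis
      by (simp add: sum_distrib_left mult.left_commute)
  qed
  have "((\<lambda>u. \<Sum>i\<in>I. w i * P i * u powr e i) has_real_derivative
          (\<Sum>i\<in>I. w i * P i * (e i * s powr (e i - 1)))) (at s)"
    using assms(2) by (auto intro!: derivative_eq_intros) (simp add: mult_ac)
  with inner assms(2) have outer: "deriv (\<lambda>u. u powr (2 * \<alpha> - real n + 1 + real k) *
                       (deriv ^^ (n + k + 1)) (\<lambda>v. v ^ (n + 1) * F v) u) s
      = (\<Sum>i\<in>I. w i * P i * (e i * s powr (e i - 1)))"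
    by (rule deriv_eq_on_pos)
  have exponent: "s powr (- (2 * \<alpha> + real k + \<mu> + 3)) * s powr (e i - 1)
      = s powr (- (\<beta> i + real n + real k + \<mu> + 3))" for i
    unfolding powr_add[symmetric] e_def by (rule arg_cong[where f="(powr) s"]) simp
  have "Pi_op n k \<mu> \<alpha> F s
      = s powr (- (2 * \<alpha> + real k + \<mu> + 3)) * (\<Sum>i\<in>I. w i * P i * (e i * s powr (e i - 1)))"
    unfolding Pi_op_def outer ..
  also have "\<dots> = (\<Sum>i\<in>I. w i * (P i * e i) * (s powr (- (2 * \<alpha> + real k + \<mu> + 3)) * s powr (e i - 1)))"
    by (simp add: sum_distrib_left mult_ac)
  also have "\<dots> = (\<Sum>i\<in>I. w i * Pi_multiplier n k \<alpha> (\<beta> i) * s powr (- (\<beta> i + real n + real k + \<mu> + 3)))"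
    unfolding exponent unfolding Pi_multiplier_def P_def e_def ..
  finally show ?thesis .
qed

lemma Pi_op_powr:
  assumes "s > 0"
  shows "Pi_op n k \<mu> \<alpha> (\<lambda>v. v powr (- \<beta>)) s
           = Pi_multiplier n k \<alpha> \<beta> * s powr (- (\<beta> + real n + real k + \<mu> + 3))"
proof -
  have "Pi_op n k \<mu> \<alpha> (\<lambda>v. v powr (- \<beta>)) s
      = (\<Sum>i\<in>{()}. 1 * Pi_multiplier n k \<alpha> \<beta> * s powr (- (\<beta> + real n + real k + \<mu> + 3)))"
    by (rule Pi_op_powr_sum) (simp_all add: assms)
  then show ?thesis
    by simp
qed

lemma Pi_multiplier_integer_exponent:
  assumes "j \<le> n"
  shows "Pi_multiplier n k \<alpha> (real j + 1) = 0"
proof -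
  have "n - j \<in> {..<n + k + 1}" and "real n + 1 - (real j + 1) - real (n - j) = 0"
    using assms by (auto simp: of_nat_diff)
  then have "\<exists>i\<in>{..<n + k + 1}. real n + 1 - (real j + 1) - real i = 0"
    by blast
  then have "(\<Prod>i<n + k + 1. real n + 1 - (real j + 1) - real i) = 0"
    by (rule prod_zero[OF finite_lessThan])
  then show ?thesis
    unfolding Pi_multiplier_def by (simp only: mult_zero_left)
qed

lemma Pi_multiplier_remainder_exponent: "Pi_multiplier n k \<alpha> (2 * \<alpha> - real n + 1) = 0"
  by (simp add: Pi_multiplier_def)

lemma Pi_multiplier_fractional_exponent:
  assumes "real n < \<alpha>"
  shows "Pi_multiplier n k \<alpha> (\<alpha> + 1)
           = (-1) ^ (n + k + 1) * (Gamma (\<alpha> + 1 + real k) / Gamma (\<alpha> - real n)) * (\<alpha> - real n)"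
proof -
  have "(\<Prod>j<n + k + 1. real n + 1 - (\<alpha> + 1) - real j) = (\<Prod>j<n + k + 1. (-1) * (\<alpha> - real n + real j))"
    by (rule prod.cong) auto
  also have "\<dots> = (-1) ^ (n + k + 1) * pochhammer (\<alpha> - real n) (n + k + 1)"
    by (simp only: prod.distrib prod_constant pochhammer_prod lessThan_atLeast0) simp
  also have "pochhammer (\<alpha> - real n) (n + k + 1) = Gamma (\<alpha> + 1 + real k) / Gamma (\<alpha> - real n)"
  proof -
    have "\<alpha> - real n \<notin> \<int>\<^sub>\<le>\<^sub>0"
      using assms by (auto dest: nonpos_Ints_nonpos)
    from pochhammer_Gamma[OF this, of "n + k + 1"] show ?thesis
      by (simp add: add.assoc)
  qed
  finally show ?thesis
    by (simp add: Pi_multiplier_def)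
qed

lemma Pi_op_xhat:
  assumes "s > 0"
  shows "Pi_op n k \<mu> \<alpha> (xhat n \<alpha> a b c) s
           = b * Pi_multiplier n k \<alpha> (\<alpha> + 1) * s powr (- (\<alpha> + real n + real k + \<mu> + 4))"
proof -
  define w where "w = (\<lambda>i. if i \<le> n then a i else if i = n + 1 then b else c)"
  define \<beta> where "\<beta> = (\<lambda>i. if i \<le> n then real i + 1 else if i = n + 1 then \<alpha> + 1
                          else 2 * \<alpha> - real n + 1)"
  define \<gamma> where "\<gamma> = (\<lambda>i. s powr (- (\<beta> i + real n + real k + \<mu> + 3)))"
  have "xhat n \<alpha> a b c v = (\<Sum>i\<le>Suc (Suc n). w i * v powr (- \<beta> i))" for v
  proof -
    have "(\<Sum>i\<le>n. w i * v powr (- \<beta> i)) = (\<Sum>j\<le>n. v powr (- (real j + 1)) * a j)"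
      by (rule sum.cong) (auto simp: w_def \<beta>_def)
    then show ?thesis
      by (simp add: xhat_def w_def \<beta>_def mult.commute)
  qed
  then have "Pi_op n k \<mu> \<alpha> (xhat n \<alpha> a b c) s
      = (\<Sum>i\<le>Suc (Suc n). w i * Pi_multiplier n k \<alpha> (\<beta> i) * \<gamma> i)"
    unfolding \<gamma>_def by (intro Pi_op_powr_sum assms) auto
  also have "\<dots> = (\<Sum>i\<le>n. w i * Pi_multiplier n k \<alpha> (\<beta> i) * \<gamma> i)
      + b * Pi_multiplier n k \<alpha> (\<alpha> + 1) * \<gamma> (Suc n)
      + c * Pi_multiplier n k \<alpha> (2 * \<alpha> - real n + 1) * \<gamma> (Suc (Suc n))"
    by (simp only: sum.atMost_Suc) (simp add: w_def \<beta>_def)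
  also have "(\<Sum>i\<le>n. w i * Pi_multiplier n k \<alpha> (\<beta> i) * \<gamma> i) = 0"
    by (intro sum.neutral) (simp add: \<beta>_def Pi_multiplier_integer_exponent)
  also have "\<gamma> (Suc n) = s powr (- (\<alpha> + real n + real k + \<mu> + 4))"
    unfolding \<gamma>_def by (rule arg_cong[where f="(powr) s"]) (simp add: \<beta>_def)
  finally show ?thesis
    by (simp add: Pi_multiplier_remainder_exponent)
qed

lemma Gamma_integral_real_pos:
  fixes x :: real
  assumes "x > 0"
  shows "((\<lambda>t. t powr (x - 1) / exp t) has_integral Gamma x) {0<..}"
proof -
  have "((\<lambda>t. if t \<in> {0<..} then t powr (x - 1) / exp t else 0) has_integral Gamma x) {0..}"
    using Gamma_integral_real[OF assms] by (rule has_integral_spike[of "{0}", rotated 2]) auto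
  then show ?thesis
    by (subst (asm) has_integral_restrict) auto
qed

lemma has_integral_laplace_powr:
  fixes p s :: real
  assumes "p > -1" and "s > 0"
  shows "((\<lambda>T. exp (- s * T) * T powr p) has_integral Gamma (p + 1) / s powr (p + 1)) {0<..}"
proof -
  let ?f = "\<lambda>t::real. t powr p / exp t"
  have Gamma: "(?f has_integral Gamma (p + 1)) {0<..}"
    using Gamma_integral_real_pos[of "p + 1"] assms(1) by simp
  have "(\<lambda>x. s * x) ` {0<..} = {0<..}"
  proof
    show "{0<..} \<subseteq> (\<lambda>x. s * x) ` {0<..}"
      using assms(2) by (auto intro!: image_eqI[of _ _ "y / s" for y])
  qed (use assms(2) in auto)
  moreover have "inj_on (\<lambda>x. s * x) {0<..}"
    using assms(2) by (auto intro: inj_onI)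
  moreover have "((\<lambda>x. s * x) has_field_derivative s) (at x within {0<..})" for x
    by (auto intro!: derivative_eq_intros)
  moreover have "?f absolutely_integrable_on {0<..}"
    using Gamma by (intro nonnegative_absolutely_integrable_1) (auto simp: has_integral_integrable)
  ultimately have "(\<lambda>x. \<bar>s\<bar> * ?f (s * x)) absolutely_integrable_on {0<..} \<and>
      integral {0<..} (\<lambda>x. \<bar>s\<bar> * ?f (s * x)) = Gamma (p + 1)"
    using has_absolute_integral_change_of_variables_1'[of "{0<..}" "\<lambda>x. s * x" "\<lambda>_. s" ?f]
      integral_unique[OF Gamma] by simp
  then have "((\<lambda>x. s * ?f (s * x)) has_integral Gamma (p + 1)) {0<..}"
    using assms(2) by (metis abs_of_pos absolutely_integrable_on_def integrable_integral)
  then have scaled: "((\<lambda>x. s powr - (p + 1) * (s * ?f (s * x))) has_integral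
               s powr - (p + 1) * Gamma (p + 1)) {0<..}"
    by (rule has_integral_mult_right)
  have pointwise: "s powr - (p + 1) * (s * ?f (s * x)) = exp (- s * x) * x powr p" if "x > 0" for x
  proof -
    have "s powr - (p + 1) * s powr p = s powr (- 1)"
      unfolding powr_add[symmetric] by simp
    then have scale: "s powr - (p + 1) * s powr p * s = 1"
      using assms(2) by (simp add: powr_minus)
    have "s powr - (p + 1) * (s * ?f (s * x))
        = (s powr - (p + 1) * s powr p * s) * (x powr p / exp (s * x))"
      unfolding powr_mult by (simp add: mult_ac)
    also have "\<dots> = x powr p / exp (s * x)"
      unfolding scale by simp
    also have "\<dots> = exp (- s * x) * x powr p"
      by (simp add: exp_minus field_simps)
    finally show ?thesis .
  qed
  have "((\<lambda>T. exp (- s * T) * T powr p) has_integral s powr - (p + 1) * Gamma (p + 1)) {0<..}"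
    using pointwise by (intro has_integral_eq[OF _ scaled]) simp
  then show ?thesis
    unfolding powr_minus by (simp add: divide_inverse mult.commute)
qed

lemma is_laplace_transform_powr:
  assumes "p > -1" and "\<And>s. s > 0 \<Longrightarrow> F s = C * s powr (- (p + 1))"
  shows "is_laplace_transform (\<lambda>T. C * T powr p / Gamma (p + 1)) F"
  unfolding is_laplace_transform_def
proof (intro allI impI)
  fix s :: real
  assume "s > 0"
  have "Gamma (p + 1) > 0"
    using assms(1) by (intro Gamma_real_pos) simp
  then have "(C / Gamma (p + 1)) * (Gamma (p + 1) / s powr (p + 1)) = F s"
    unfolding assms(2)[OF \<open>s > 0\<close>] powr_minus by (simp add: divide_inverse)
  then show "((\<lambda>T. exp (- s * T) * (C * T powr p / Gamma (p + 1))) has_integral F s) {0<..}"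
    using has_integral_mult_right[OF has_integral_laplace_powr[OF assms(1) \<open>s > 0\<close>], of "C / Gamma (p + 1)"]
    by (simp add: mult_ac)
qed

definition eval_terms :: "(real \<times> real \<times> nat) list \<Rightarrow> (real \<Rightarrow> real) \<Rightarrow> real \<Rightarrow> real" where
  "eval_terms L f x = (\<Sum>(c, r, d)\<leftarrow>L. c * x powr r * (deriv ^^ d) f x)"

definition deriv_terms :: "(real \<times> real \<times> nat) list \<Rightarrow> (real \<times> real \<times> nat) list" where
  "deriv_terms L = concat (map (\<lambda>(c, r, d). [(c * r, r - 1, d), (c, r, Suc d)]) L)"

lemma eval_terms_Nil [simp]: "eval_terms [] f x = 0"
  by (simp add: eval_terms_def)

lemma eval_terms_Cons [simp]:
  "eval_terms ((c, r, d) # L) f x = c * x powr r * (deriv ^^ d) f x + eval_terms L f x"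
  by (simp add: eval_terms_def)

lemma deriv_terms_Nil [simp]: "deriv_terms [] = []"
  by (simp add: deriv_terms_def)

lemma deriv_terms_Cons [simp]:
  "deriv_terms ((c, r, d) # L) = (c * r, r - 1, d) # (c, r, Suc d) # deriv_terms L"
  by (simp add: deriv_terms_def)

lemma has_real_derivative_eval_terms:
  assumes "smooth_on {0<..} f" and "x > 0"
  shows "(eval_terms L f has_real_derivative eval_terms (deriv_terms L) f x) (at x)"
proof (induction L)
  case Nil
  then show ?case by simp
next
  case (Cons t L)
  obtain c r d where t: "t = (c, r, d)"
    by (cases t)
  have "((deriv ^^ d) f has_real_derivative (deriv ^^ Suc d) f x) (at x)"
    using assms unfolding smooth_on_def by (simp add: DERIV_deriv_iff_real_differentiable)
  then have "((\<lambda>x. c * x powr r * (deriv ^^ d) f x + eval_terms L f x) has_real_derivative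
      c * (r * x powr (r - 1)) * (deriv ^^ d) f x + c * x powr r * (deriv ^^ Suc d) f x
        + eval_terms (deriv_terms L) f x) (at x)"
    using assms(2) Cons by (auto intro!: derivative_eq_intros)
  then show ?case
    unfolding t by (simp add: algebra_simps)
qed

lemma higher_deriv_eval_terms:
  assumes "smooth_on {0<..} f" and "x > 0"
  shows "(deriv ^^ m) (eval_terms L f) x = eval_terms ((deriv_terms ^^ m) L) f x"
  using assms(2)
proof (induction m arbitrary: x)
  case 0
  then show ?case by simp
next
  case (Suc m)
  show ?case
    using deriv_eq_on_pos[OF Suc.IH Suc.prems has_real_derivative_eval_terms[OF assms(1) Suc.prems]]
    by simp
qed

lemma deriv_terms_exponent_le:
  assumes "\<forall>(c, r, d)\<in>set L. r \<le> B"
  shows "\<forall>(c, r, d)\<in>set ((deriv_terms ^^ m) L). r \<le> B"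
proof (induction m)
  case 0
  then show ?case using assms by simp
next
  case (Suc m)
  have "\<forall>(c, r, d)\<in>set (deriv_terms M). r \<le> B" if "\<forall>(c, r, d)\<in>set M. r \<le> B" for M
    using that by (induction M) auto
  then show ?case
    using Suc by simp
qed

definition shift_terms :: "real \<Rightarrow> (real \<times> real \<times> nat) list \<Rightarrow> (real \<times> real \<times> nat) list" where
  "shift_terms e L = map (\<lambda>(c, r, d). (c, r + e, d)) L"

lemma eval_terms_shift_terms:
  assumes "x > 0"
  shows "eval_terms (shift_terms e L) f x = x powr e * eval_terms L f x"
  using assms by (induction L) (auto simp: shift_terms_def powr_add algebra_simps)

definition Pi_terms :: "nat \<Rightarrow> nat \<Rightarrow> real \<Rightarrow> real \<Rightarrow> (real \<times> real \<times> nat) list" where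
  "Pi_terms n k \<mu> \<alpha> = shift_terms (- (2 * \<alpha> + real k + \<mu> + 3))
     (deriv_terms (shift_terms (2 * \<alpha> - real n + 1 + real k)
       ((deriv_terms ^^ (n + k + 1)) [(1, real n + 1, 0)])))"

lemma Pi_op_eq_eval_Pi_terms:
  assumes "smooth_on {0<..} f" and "s > 0"
  shows "Pi_op n k \<mu> \<alpha> f s = eval_terms (Pi_terms n k \<mu> \<alpha>) f s"
proof -
  define g where "g = 2 * \<alpha> - real n + 1 + real k"
  define L where "L = shift_terms g ((deriv_terms ^^ (n + k + 1)) [(1, real n + 1, 0)])"
  have base: "v ^ (n + 1) * f v = eval_terms [(1, real n + 1, 0)] f v" if "v > 0" for v
    using powr_realpow[OF that, of "n + 1"] by (simp add: add.commute)
  have "u powr g * (deriv ^^ (n + k + 1)) (\<lambda>v. v ^ (n + 1) * f v) u = eval_terms L f u"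
    if "u > 0" for u
  proof -
    have "(deriv ^^ (n + k + 1)) (\<lambda>v. v ^ (n + 1) * f v) u
        = (deriv ^^ (n + k + 1)) (eval_terms [(1, real n + 1, 0)] f) u"
      using base that by (rule higher_deriv_eq_on_pos)
    also have "\<dots> = eval_terms ((deriv_terms ^^ (n + k + 1)) [(1, real n + 1, 0)]) f u"
      using assms(1) that by (rule higher_deriv_eval_terms)
    finally show ?thesis
      by (simp add: L_def eval_terms_shift_terms[OF that])
  qed
  then have "deriv (\<lambda>u. u powr g * (deriv ^^ (n + k + 1)) (\<lambda>v. v ^ (n + 1) * f v) u) s
      = eval_terms (deriv_terms L) f s"
    using assms(2) has_real_derivative_eval_terms[OF assms] by (rule deriv_eq_on_pos)
  then show ?thesis
    unfolding Pi_op_def Pi_terms_def g_def[symmetric] L_def[symmetric]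
    using assms(2) by (simp add: eval_terms_shift_terms)
qed

lemma Pi_terms_exponent_le:
  assumes "(c, r, d) \<in> set (Pi_terms n k \<mu> \<alpha>)"
  shows "r \<le> - (\<mu> + 1)"
proof -
  have "\<forall>(c, r, d)\<in>set ((deriv_terms ^^ (n + k + 1)) [(1, real n + 1, 0)]). r \<le> real n + 1"
    by (rule deriv_terms_exponent_le) simp
  then have "\<forall>(c, r, d)\<in>set (shift_terms (2 * \<alpha> - real n + 1 + real k)
      ((deriv_terms ^^ (n + k + 1)) [(1, real n + 1, 0)])). r \<le> 2 * \<alpha> + 2 + real k"
    by (auto simp: shift_terms_def)
  then have "\<forall>(c, r, d)\<in>set (deriv_terms (shift_terms (2 * \<alpha> - real n + 1 + real k)
      ((deriv_terms ^^ (n + k + 1)) [(1, real n + 1, 0)]))). r \<le> 2 * \<alpha> + 2 + real k"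
    using deriv_terms_exponent_le[where m=1] by simp
  then show ?thesis
    using assms by (auto simp: Pi_terms_def shift_terms_def)
qed

lemma Pi_op_annihilates_integer_powers:
  assumes "j \<le> n" and "s > 0"
  shows "Pi_op n k \<mu> \<alpha> (\<lambda>s. s powr (- (real j + 1))) s = 0"
  unfolding Pi_op_powr[OF assms(2)] Pi_multiplier_integer_exponent[OF assms(1)] by simp

lemma Pi_op_annihilates_remainder_power:
  assumes "s > 0"
  shows "Pi_op n k \<mu> \<alpha> (\<lambda>s. s powr (- (2 * \<alpha> - real n + 1))) s = 0"
  unfolding Pi_op_powr[OF assms] Pi_multiplier_remainder_exponent by simp

lemma is_laplace_transform_Pi_op_xhat:
  assumes "real n < \<alpha>" and "\<mu> > -1"
  shows "is_laplace_transform
          (\<lambda>T. (-1) ^ (n + 1 + k) *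
               (Gamma (\<alpha> + 1 + real k) / Gamma (\<alpha> - real n)) *
               ((\<alpha> - real n) * T powr (real n + \<alpha> + 3 + real k + \<mu>)
                  / Gamma (real n + \<alpha> + real k + \<mu> + 4)) * b)
          (Pi_op n k \<mu> \<alpha> (xhat n \<alpha> a b c))"
proof -
  define p where "p = real n + \<alpha> + 3 + real k + \<mu>"
  define C where "C = (-1) ^ (n + 1 + k) * (Gamma (\<alpha> + 1 + real k) / Gamma (\<alpha> - real n)) * (\<alpha> - real n) * b"
  have "Pi_op n k \<mu> \<alpha> (xhat n \<alpha> a b c) s = C * s powr (- (p + 1))" if "s > 0" for s
  proof -
    have exponent: "- (\<alpha> + real n + real k + \<mu> + 4) = - (p + 1)"
      by (simp add: p_def)
    show ?thesis
      unfolding Pi_op_xhat[OF that] exponent Pi_multiplier_fractional_exponent[OF assms(1)] C_def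
      by (simp add: mult_ac)
  qed
  then have transform: "is_laplace_transform (\<lambda>T. C * T powr p / Gamma (p + 1))
      (Pi_op n k \<mu> \<alpha> (xhat n \<alpha> a b c))"
    using assms by (intro is_laplace_transform_powr) (auto simp: p_def)
  have Gamma_argument: "real n + \<alpha> + real k + \<mu> + 4 = p + 1"
    by (simp add: p_def)
  show ?thesis
    using transform unfolding Gamma_argument p_def[symmetric] by (simp add: C_def mult_ac)
qed

lemma Pi_op_expansion:
  assumes "\<mu> > -1"
  shows "\<exists>cs :: (real \<times> real \<times> nat) list.
           (\<forall>(c, \<nu>, m) \<in> set cs. \<nu> \<ge> \<mu> + 1 \<and> \<nu> > 0) \<and>
           (\<forall>f. smooth_on {0<..} f \<longrightarrow>
              (\<forall>s>0. Pi_op n k \<mu> \<alpha> f s =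
                     (\<Sum>(c, \<nu>, m) \<leftarrow> cs. c * s powr (- \<nu>) * (deriv ^^ m) f s)))"
proof (intro exI conjI allI impI)
  let ?cs = "map (\<lambda>(c, r, d). (c, - r, d)) (Pi_terms n k \<mu> \<alpha>)"
  show "\<forall>(c, \<nu>, m) \<in> set ?cs. \<nu> \<ge> \<mu> + 1 \<and> \<nu> > 0"
    using Pi_terms_exponent_le assms by fastforce
  show "Pi_op n k \<mu> \<alpha> f s = (\<Sum>(c, \<nu>, m) \<leftarrow> ?cs. c * s powr (- \<nu>) * (deriv ^^ m) f s)"
    if "smooth_on {0<..} f" and "s > 0" for f s
    using Pi_op_eq_eval_Pi_terms[OF that]
    by (simp add: eval_terms_def case_prod_unfold comp_def)
qed

theorem proposition2:
  fixes n k :: nat and \<alpha> \<mu> :: real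
  assumes "real n < \<alpha>" and "\<alpha> \<le> real n + 1" and "\<mu> > -1"
  shows
    "(\<forall>j\<le>n. \<forall>s>0. Pi_op n k \<mu> \<alpha> (\<lambda>s. s powr (- (real j + 1))) s = 0)
   \<and> (\<forall>s>0. Pi_op n k \<mu> \<alpha> (\<lambda>s. s powr (- (2 * \<alpha> - real n + 1))) s = 0)
   \<and> (\<forall>(a :: nat \<Rightarrow> real) (b :: real) (c :: real).
        is_laplace_transform
          (\<lambda>T. (-1) ^ (n + 1 + k) *
               (Gamma (\<alpha> + 1 + real k) / Gamma (\<alpha> - real n)) *
               ((\<alpha> - real n) * T powr (real n + \<alpha> + 3 + real k + \<mu>)
                  / Gamma (real n + \<alpha> + real k + \<mu> + 4)) * b)
          (Pi_op n k \<mu> \<alpha> (xhat n \<alpha> a b c)))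
   \<and> (\<exists>cs :: (real \<times> real \<times> nat) list.
        (\<forall>(c, \<nu>, m) \<in> set cs. \<nu> \<ge> \<mu> + 1 \<and> \<nu> > 0) \<and>
        (\<forall>f. smooth_on {0<..} f \<longrightarrow>
           (\<forall>s>0. Pi_op n k \<mu> \<alpha> f s =
                  (\<Sum>(c, \<nu>, m) \<leftarrow> cs. c * s powr (- \<nu>) * (deriv ^^ m) f s))))"
  by (intro conjI allI impI Pi_op_annihilates_integer_powers Pi_op_annihilates_remainder_power
      is_laplace_transform_Pi_op_xhat Pi_op_expansion assms)

end
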